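(* Let $L\dashv R:\mathcal{D}\rightleftarrows\mathcal{C}$ be an adjunction (with $L:\mathcal{D}\to\mathcal{C}$, unit $\eta$) where $\mathcal{D}$ is cartesian. Let $W$ be an object of $\mathcal{D}$ such that the counit of the sliced adjunction $L_W\dashv R_W:\mathcal{D}/W\rightleftarrows\mathcal{C}/LW$ is an isomorphism (so $L_WR_W\cong \mathrm{Id}_{\mathcal{C}/LW}$). Assume that for every object $X_\phi$ (i.e. $\phi:X\to LW$) of $\mathcal{C}/LW$, the unit $\eta^W$ of $L_W\dashv R_W$ is an isomorphism at the object $W^*\Sigma_WR_W(X_\phi)$. Then for any object $V_f$ (i.e. $f:V\to W$) of $\mathcal{D}/W$, $\eta^W_{W^*V}$ is an isomorphism if and only if $\eta^W_{V_f}$ is an isomorphism.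
   Context: Sliced adjunction at an object $W$ of $\mathcal{D}$: $L_W:\mathcal{D}/W\to\mathcal{C}/LW$ sends $g:V\to W$ to $Lg:LV\to LW$, and $R_W:\mathcal{C}/LW\to\mathcal{D}/W$ sends $h:Z\to LW$ to the pullback of $Rh:RZ\to RLW$ along the unit $\eta_W:W\to RLW$ (as an object over $W$). $\eta^W$ denotes the unit of $L_W\dashv R_W$. $\Sigma_W:\mathcal{D}/W\to\mathcal{D}$ is the forgetful functor (taking the domain), and $W^*:\mathcal{D}\to\mathcal{D}/W$ sends $A$ to the projection $\pi_1:W\times A\to W$; thus $W^*V$ is $\pi_1:W\times V\to W$. *)

theory Defs
  imports Main
begin

record ('o,'a) category =
  Ob  :: "'o set"
  Ar  :: "'a set"
  Dom :: "'a \<Rightarrow> 'o"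
  Cod :: "'a \<Rightarrow> 'o"
  Idt :: "'o \<Rightarrow> 'a"
  Cmp :: "'a \<Rightarrow> 'a \<Rightarrow> 'a"   (* Cmp C g f = g \<circ> f *)

definition hom :: "('o,'a) category \<Rightarrow> 'o \<Rightarrow> 'o \<Rightarrow> 'a set" where
  "hom C A B = {f \<in> Ar C. Dom C f = A \<and> Cod C f = B}"

definition is_category :: "('o,'a) category \<Rightarrow> bool" where
  "is_category C \<longleftrightarrow>
     (\<forall>f\<in>Ar C. Dom C f \<in> Ob C \<and> Cod C f \<in> Ob C) \<and>
     (\<forall>A\<in>Ob C. Idt C A \<in> hom C A A) \<and>
     (\<forall>f\<in>Ar C. \<forall>g\<in>Ar C. Cod C f = Dom C g \<longrightarrow> Cmp C g f \<in> hom C (Dom C f) (Cod C g)) \<and>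
     (\<forall>f\<in>Ar C. Cmp C (Idt C (Cod C f)) f = f \<and> Cmp C f (Idt C (Dom C f)) = f) \<and>
     (\<forall>f\<in>Ar C. \<forall>g\<in>Ar C. \<forall>h\<in>Ar C. Cod C f = Dom C g \<longrightarrow> Cod C g = Dom C h \<longrightarrow>
        Cmp C h (Cmp C g f) = Cmp C (Cmp C h g) f)"

definition is_iso :: "('o,'a) category \<Rightarrow> 'a \<Rightarrow> bool" where
  "is_iso C f \<longleftrightarrow> f \<in> Ar C \<and>
     (\<exists>g\<in>hom C (Cod C f) (Dom C f). Cmp C g f = Idt C (Dom C f) \<and> Cmp C f g = Idt C (Cod C f))"

record ('o1,'a1,'o2,'a2) cfunctor =
  FO :: "'o1 \<Rightarrow> 'o2"
  FA :: "'a1 \<Rightarrow> 'a2"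

definition is_functor :: "('o1,'a1) category \<Rightarrow> ('o2,'a2) category \<Rightarrow> ('o1,'a1,'o2,'a2) cfunctor \<Rightarrow> bool" where
  "is_functor C D F \<longleftrightarrow>
     (\<forall>A\<in>Ob C. FO F A \<in> Ob D) \<and>
     (\<forall>A B f. f \<in> hom C A B \<longrightarrow> FA F f \<in> hom D (FO F A) (FO F B)) \<and>
     (\<forall>A\<in>Ob C. FA F (Idt C A) = Idt D (FO F A)) \<and>
     (\<forall>f\<in>Ar C. \<forall>g\<in>Ar C. Cod C f = Dom C g \<longrightarrow> FA F (Cmp C g f) = Cmp D (FA F g) (FA F f))"

definition id_functor :: "('o,'a) category \<Rightarrow> ('o,'a,'o,'a) cfunctor" where
  "id_functor C = \<lparr>FO = (\<lambda>A. A), FA = (\<lambda>f. f)\<rparr>"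

definition fcomp :: "('o2,'a2,'o3,'a3) cfunctor \<Rightarrow> ('o1,'a1,'o2,'a2) cfunctor \<Rightarrow> ('o1,'a1,'o3,'a3) cfunctor" where
  "fcomp G F = \<lparr>FO = (\<lambda>A. FO G (FO F A)), FA = (\<lambda>f. FA G (FA F f))\<rparr>"

definition is_nat_trans :: "('o1,'a1) category \<Rightarrow> ('o2,'a2) category \<Rightarrow>
   ('o1,'a1,'o2,'a2) cfunctor \<Rightarrow> ('o1,'a1,'o2,'a2) cfunctor \<Rightarrow> ('o1 \<Rightarrow> 'a2) \<Rightarrow> bool" where
  "is_nat_trans C D F G \<tau> \<longleftrightarrow>
     (\<forall>A\<in>Ob C. \<tau> A \<in> hom D (FO F A) (FO G A)) \<and>
     (\<forall>f\<in>Ar C. Cmp D (\<tau> (Cod C f)) (FA F f) = Cmp D (FA G f) (\<tau> (Dom C f)))"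

definition is_adjunction :: "('d,'e) category \<Rightarrow> ('c,'f) category \<Rightarrow>
   ('d,'e,'c,'f) cfunctor \<Rightarrow> ('c,'f,'d,'e) cfunctor \<Rightarrow> ('d \<Rightarrow> 'e) \<Rightarrow> ('c \<Rightarrow> 'f) \<Rightarrow> bool" where
  "is_adjunction D C L R \<eta> \<epsilon> \<longleftrightarrow>
     is_functor D C L \<and> is_functor C D R \<and>
     is_nat_trans D D (id_functor D) (fcomp R L) \<eta> \<and>
     is_nat_trans C C (fcomp L R) (id_functor C) \<epsilon> \<and>
     (\<forall>A\<in>Ob D. Cmp C (\<epsilon> (FO L A)) (FA L (\<eta> A)) = Idt C (FO L A)) \<and>
     (\<forall>X\<in>Ob C. Cmp D (FA R (\<epsilon> X)) (\<eta> (FO R X)) = Idt D (FO R X))"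

definition is_terminal :: "('o,'a) category \<Rightarrow> 'o \<Rightarrow> bool" where
  "is_terminal C T \<longleftrightarrow> T \<in> Ob C \<and> (\<forall>A\<in>Ob C. \<exists>!u. u \<in> hom C A T)"

definition is_product :: "('o,'a) category \<Rightarrow> 'o \<Rightarrow> 'o \<Rightarrow> 'o \<Rightarrow> 'a \<Rightarrow> 'a \<Rightarrow> bool" where
  "is_product C A B P p1 p2 \<longleftrightarrow> p1 \<in> hom C P A \<and> p2 \<in> hom C P B \<and>
     (\<forall>Q q1 q2. q1 \<in> hom C Q A \<longrightarrow> q2 \<in> hom C Q B \<longrightarrow>
        (\<exists>!u. u \<in> hom C Q P \<and> Cmp C p1 u = q1 \<and> Cmp C p2 u = q2))"

definition cartesian :: "('o,'a) category \<Rightarrow> bool" where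
  "cartesian C \<longleftrightarrow> (\<exists>T. is_terminal C T) \<and>
     (\<forall>A\<in>Ob C. \<forall>B\<in>Ob C. \<exists>P p1 p2. is_product C A B P p1 p2)"

definition is_pullback :: "('o,'a) category \<Rightarrow> 'a \<Rightarrow> 'a \<Rightarrow> 'o \<Rightarrow> 'a \<Rightarrow> 'a \<Rightarrow> bool" where
  "is_pullback C f g P p q \<longleftrightarrow> f \<in> Ar C \<and> g \<in> Ar C \<and> Cod C f = Cod C g \<and>
     p \<in> hom C P (Dom C f) \<and> q \<in> hom C P (Dom C g) \<and> Cmp C f p = Cmp C g q \<and>
     (\<forall>Q x y. x \<in> hom C Q (Dom C f) \<longrightarrow> y \<in> hom C Q (Dom C g) \<longrightarrow> Cmp C f x = Cmp C g y \<longrightarrow>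
        (\<exists>!u. u \<in> hom C Q P \<and> Cmp C p u = x \<and> Cmp C q u = y))"

section \<open>Slices. Objects of D/W are arrows of D with codomain W.\<close>

text \<open>W^* V : the projection pi_1 : W x V -> W (for a chosen product).\<close>
definition base_change :: "('o,'a) category \<Rightarrow> 'o \<Rightarrow> 'o \<Rightarrow> 'a" where
  "base_change D W V = fst (snd (SOME (P, p1, p2). is_product D W V P p1 p2))"

definition sl_pb :: "('d,'e) category \<Rightarrow> ('c,'f,'d,'e) cfunctor \<Rightarrow> ('d \<Rightarrow> 'e) \<Rightarrow> 'd \<Rightarrow> 'f \<Rightarrow> 'd \<times> 'e \<times> 'e" where
  "sl_pb D R \<eta> W h = (SOME (P, p1, p2). is_pullback D (\<eta> W) (FA R h) P p1 p2)"

text \<open>R_W h, as an object of D/W (the arrow P -> W).\<close>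
definition sl_R :: "('d,'e) category \<Rightarrow> ('c,'f,'d,'e) cfunctor \<Rightarrow> ('d \<Rightarrow> 'e) \<Rightarrow> 'd \<Rightarrow> 'f \<Rightarrow> 'e" where
  "sl_R D R \<eta> W h = fst (snd (sl_pb D R \<eta> W h))"

text \<open>Unit of L_W -| R_W at g : A -> W: the map A -> P induced by (g, eta_A) into the
  pullback R_W(L g).  Its underlying arrow in D.\<close>
definition sl_unit :: "('d,'e) category \<Rightarrow> ('d,'e,'c,'f) cfunctor \<Rightarrow> ('c,'f,'d,'e) cfunctor \<Rightarrow>
     ('d \<Rightarrow> 'e) \<Rightarrow> 'd \<Rightarrow> 'e \<Rightarrow> 'e" where
  "sl_unit D L R \<eta> W g = (case sl_pb D R \<eta> W (FA L g) of (P, p1, p2) \<Rightarrow>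
     THE u. u \<in> hom D (Dom D g) P \<and> Cmp D p1 u = g \<and> Cmp D p2 u = \<eta> (Dom D g))"

text \<open>Counit of L_W -| R_W at h : Z -> LW: eps_Z o L(p2) : L P -> Z (underlying arrow in C).\<close>
definition sl_counit :: "('d,'e) category \<Rightarrow> ('c,'f) category \<Rightarrow> ('d,'e,'c,'f) cfunctor \<Rightarrow>
     ('c,'f,'d,'e) cfunctor \<Rightarrow> ('d \<Rightarrow> 'e) \<Rightarrow> ('c \<Rightarrow> 'f) \<Rightarrow> 'd \<Rightarrow> 'f \<Rightarrow> 'f" where
  "sl_counit D C L R \<eta> \<epsilon> W h = (case sl_pb D R \<eta> W h of (P, p1, p2) \<Rightarrow>
     Cmp C (\<epsilon> (Dom C h)) (FA L p2))"

end

theory Submission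
  imports Defs
begin

(* Call an arrow g of D unit-cartesian when the naturality square of \<eta> at g is a pullback.
   The unit of L_W -| R_W at g : A -> W is the comparison map from A into the pullback of RLg
   along \<eta>_W, so it is invertible exactly when g is unit-cartesian. Unit-cartesian arrows
   contain the isomorphisms and are closed under composition and left cancellation.

   The hypothesis at \<phi> = id_LW makes the projection W x W -> W unit-cartesian, hence also the
   diagonal W -> W x W (its section). Mapping a witness of the pullback problem for the graph
   <f, 1> : V -> W x V along 1 x f turns it into one for the diagonal, so the graph is
   unit-cartesian too, and therefore so is f = \<pi>_1 <f, 1> whenever \<pi>_1 : W x V -> W is.
   Conversely, if f is unit-cartesian then V is the pullback R_W(Lf), and the hypothesis at
   \<phi> = Lf makes \<pi>_1 : W x V -> W unit-cartesian. *)

section \<open>Pullbacks and products in a category\<close>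

locale cat =
  fixes C :: "('o,'a) category"
  assumes category: "is_category C"
begin

lemma dom_in_Ob [simp]: "f \<in> Ar C \<Longrightarrow> Dom C f \<in> Ob C"
  and cod_in_Ob [simp]: "f \<in> Ar C \<Longrightarrow> Cod C f \<in> Ob C"
  using category unfolding is_category_def by auto

lemma id_arr [simp]: "A \<in> Ob C \<Longrightarrow> Idt C A \<in> Ar C"
  and dom_id [simp]: "A \<in> Ob C \<Longrightarrow> Dom C (Idt C A) = A"
  and cod_id [simp]: "A \<in> Ob C \<Longrightarrow> Cod C (Idt C A) = A"
  using category unfolding is_category_def hom_def by auto

lemma comp_arr [simp]: "f \<in> Ar C \<Longrightarrow> g \<in> Ar C \<Longrightarrow> Cod C f = Dom C g \<Longrightarrow> Cmp C g f \<in> Ar C"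
  and dom_comp [simp]: "f \<in> Ar C \<Longrightarrow> g \<in> Ar C \<Longrightarrow> Cod C f = Dom C g \<Longrightarrow> Dom C (Cmp C g f) = Dom C f"
  and cod_comp [simp]: "f \<in> Ar C \<Longrightarrow> g \<in> Ar C \<Longrightarrow> Cod C f = Dom C g \<Longrightarrow> Cod C (Cmp C g f) = Cod C g"
  using category unfolding is_category_def hom_def by auto

lemma comp_id_left [simp]: "f \<in> Ar C \<Longrightarrow> Cod C f = B \<Longrightarrow> Cmp C (Idt C B) f = f"
  and comp_id_right [simp]: "f \<in> Ar C \<Longrightarrow> Dom C f = A \<Longrightarrow> Cmp C f (Idt C A) = f"
  using category unfolding is_category_def by auto

lemma comp_assoc:
  "f \<in> Ar C \<Longrightarrow> g \<in> Ar C \<Longrightarrow> h \<in> Ar C \<Longrightarrow> Cod C f = Dom C g \<Longrightarrow> Cod C g = Dom C h \<Longrightarrow>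
   Cmp C (Cmp C h g) f = Cmp C h (Cmp C g f)"
  using category unfolding is_category_def by auto

lemma iso_inverse:
  assumes "is_iso C f" "f \<in> hom C A B"
  obtains g where "g \<in> hom C B A" "Cmp C g f = Idt C A" "Cmp C f g = Idt C B"
  using assms unfolding is_iso_def hom_def by auto

lemma isoI: "f \<in> hom C A B \<Longrightarrow> g \<in> hom C B A \<Longrightarrow> Cmp C g f = Idt C A \<Longrightarrow>
   Cmp C f g = Idt C B \<Longrightarrow> is_iso C f"
  unfolding is_iso_def hom_def by auto

lemma comp_assoc_hom:
  "f \<in> hom C A B \<Longrightarrow> g \<in> hom C B B' \<Longrightarrow> h \<in> hom C B' B'' \<Longrightarrow>
   Cmp C h (Cmp C g f) = Cmp C (Cmp C h g) f"
  using comp_assoc by (simp add: hom_def)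

lemma id_in_hom: "A \<in> Ob C \<Longrightarrow> Idt C A \<in> hom C A A"
  by (simp add: hom_def)

lemma id_iso: "A \<in> Ob C \<Longrightarrow> is_iso C (Idt C A)"
  unfolding is_iso_def hom_def by auto

lemma hom_dom_in_Ob: "f \<in> hom C A B \<Longrightarrow> A \<in> Ob C"
  and hom_cod_in_Ob: "f \<in> hom C A B \<Longrightarrow> B \<in> Ob C"
  by (auto simp: hom_def)

lemma comp_in_hom: "f \<in> hom C A B \<Longrightarrow> g \<in> hom C B B' \<Longrightarrow> Cmp C g f \<in> hom C A B'"
  by (simp add: hom_def)

lemma comp_square:
  assumes "Cmp C f p = Cmp C g q" "p \<in> hom C P X" "q \<in> hom C P Y" "f \<in> hom C X Z" "g \<in> hom C Y Z"
    "u \<in> hom C Q P"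
  shows "Cmp C f (Cmp C p u) = Cmp C g (Cmp C q u)"
  using assms comp_assoc[of u p f] comp_assoc[of u q g] by (simp add: hom_def)

lemma pullback_arrows:
  assumes "is_pullback C f g P p q"
  shows "f \<in> hom C (Dom C f) (Cod C f)" "g \<in> hom C (Dom C g) (Cod C f)"
    "p \<in> hom C P (Dom C f)" "q \<in> hom C P (Dom C g)" "Cmp C f p = Cmp C g q"
  using assms unfolding is_pullback_def hom_def by auto

lemma pullback_mediator:
  assumes "is_pullback C f g P p q" "x \<in> hom C Q (Dom C f)" "y \<in> hom C Q (Dom C g)"
    "Cmp C f x = Cmp C g y"
  obtains u where "u \<in> hom C Q P" "Cmp C p u = x" "Cmp C q u = y"
  using assms unfolding is_pullback_def by blast

lemma pullback_mediator_unique: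
  assumes pb: "is_pullback C f g P p q" and "u \<in> hom C Q P" "u' \<in> hom C Q P"
    and "Cmp C p u = Cmp C p u'" "Cmp C q u = Cmp C q u'"
  shows "u = u'"
proof -
  note pb_ar = pullback_arrows[OF pb]
  have "Cmp C p u \<in> hom C Q (Dom C f)" "Cmp C q u \<in> hom C Q (Dom C g)"
    using assms pb_ar by (simp_all add: hom_def)
  moreover have "Cmp C f (Cmp C p u) = Cmp C g (Cmp C q u)"
    using comp_square[OF pb_ar(5,3,4,1,2) assms(2)] .
  ultimately have "\<exists>!v. v \<in> hom C Q P \<and> Cmp C p v = Cmp C p u \<and> Cmp C q v = Cmp C q u"
    using pb unfolding is_pullback_def by blast
  with assms show ?thesis by metis
qed

lemma pullback_mediator_iso_iff:
  assumes pb: "is_pullback C f g P p q" and x: "x \<in> hom C A (Dom C f)"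
    and y: "y \<in> hom C A (Dom C g)" and sq: "Cmp C f x = Cmp C g y"
    and u: "u \<in> hom C A P" and px: "Cmp C p u = x" and qy: "Cmp C q u = y"
  shows "is_iso C u \<longleftrightarrow> is_pullback C f g A x y"
proof
  note pb_ar = pullback_arrows[OF pb]
  assume "is_iso C u"
  then obtain v where v: "v \<in> hom C P A" "Cmp C v u = Idt C A" "Cmp C u v = Idt C P"
    using u iso_inverse by blast
  have xv: "Cmp C x v = p"
    using comp_assoc_hom[OF v(1) u pb_ar(3)] v(3) pb_ar(3) px by (simp add: hom_def)
  have yv: "Cmp C y v = q"
    using comp_assoc_hom[OF v(1) u pb_ar(4)] v(3) pb_ar(4) qy by (simp add: hom_def)
  show "is_pullback C f g A x y"
    unfolding is_pullback_def
  proof (intro conjI allI impI)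
    fix Q x' y' assume x': "x' \<in> hom C Q (Dom C f)" and y': "y' \<in> hom C Q (Dom C g)"
      and sq': "Cmp C f x' = Cmp C g y'"
    obtain w where w: "w \<in> hom C Q P" "Cmp C p w = x'" "Cmp C q w = y'"
      using pullback_mediator[OF pb x' y' sq'] .
    show "\<exists>!w'. w' \<in> hom C Q A \<and> Cmp C x w' = x' \<and> Cmp C y w' = y'"
    proof (intro ex1I conjI)
      show "Cmp C v w \<in> hom C Q A" using comp_in_hom[OF w(1) v(1)] .
      show "Cmp C x (Cmp C v w) = x'" using comp_assoc_hom[OF w(1) v(1) x] xv w(2) by simp
      show "Cmp C y (Cmp C v w) = y'" using comp_assoc_hom[OF w(1) v(1) y] yv w(3) by simp
      fix w' assume w': "w' \<in> hom C Q A \<and> Cmp C x w' = x' \<and> Cmp C y w' = y'"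
      then have "Cmp C p (Cmp C u w') = x'" "Cmp C q (Cmp C u w') = y'"
        using comp_assoc_hom[OF _ u pb_ar(3), of w'] comp_assoc_hom[OF _ u pb_ar(4), of w'] px qy
        by auto
      then have "Cmp C u w' = w"
        using pullback_mediator_unique[OF pb comp_in_hom[OF _ u] w(1), of w'] w w' by simp
      then show "w' = Cmp C v w"
        using comp_assoc_hom[OF _ u v(1), of w'] v(2) w' by (simp add: hom_def)
    qed
  qed (use pb_ar x y sq in \<open>simp_all add: hom_def\<close>)
next
  note pb_ar = pullback_arrows[OF pb]
  assume pbA: "is_pullback C f g A x y"
  obtain v where v: "v \<in> hom C P A" "Cmp C x v = p" "Cmp C y v = q"
    using pullback_mediator[OF pbA pb_ar(3-5)] .
  have "Cmp C x (Cmp C v u) = Cmp C x (Idt C A)" "Cmp C y (Cmp C v u) = Cmp C y (Idt C A)"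
    using comp_assoc_hom[OF u v(1) x] comp_assoc_hom[OF u v(1) y] v px qy x y
    by (simp_all add: hom_def)
  then have "Cmp C v u = Idt C A"
    using pullback_mediator_unique[OF pbA comp_in_hom[OF u v(1)] id_in_hom[OF hom_dom_in_Ob[OF u]]]
    by simp
  moreover have "Cmp C p (Cmp C u v) = Cmp C p (Idt C P)" "Cmp C q (Cmp C u v) = Cmp C q (Idt C P)"
    using comp_assoc_hom[OF v(1) u pb_ar(3)] comp_assoc_hom[OF v(1) u pb_ar(4)] v px qy pb_ar
    by (simp_all add: hom_def)
  then have "Cmp C u v = Idt C P"
    using pullback_mediator_unique[OF pb comp_in_hom[OF v(1) u] id_in_hom[OF hom_dom_in_Ob[OF v(1)]]]
    by simp
  ultimately show "is_iso C u"
    using isoI u v(1) by blast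
qed

lemma pullback_along_id:
  assumes "f \<in> Ar C"
  shows "is_pullback C f (Idt C (Cod C f)) (Dom C f) (Idt C (Dom C f)) f"
  using assms unfolding is_pullback_def by (auto simp: hom_def)

lemma product_projections:
  assumes "is_product C A B P p1 p2"
  shows "p1 \<in> hom C P A" "p2 \<in> hom C P B"
  using assms unfolding is_product_def by blast+

lemma product_mediator:
  assumes "is_product C A B P p1 p2" "q1 \<in> hom C Q A" "q2 \<in> hom C Q B"
  obtains u where "u \<in> hom C Q P" "Cmp C p1 u = q1" "Cmp C p2 u = q2"
  using assms unfolding is_product_def by blast

lemma product_mediator_unique:
  assumes pr: "is_product C A B P p1 p2" and "u \<in> hom C Q P" "u' \<in> hom C Q P"
    and "Cmp C p1 u = Cmp C p1 u'" "Cmp C p2 u = Cmp C p2 u'"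
  shows "u = u'"
proof -
  have "Cmp C p1 u \<in> hom C Q A" "Cmp C p2 u \<in> hom C Q B"
    using comp_in_hom[OF assms(2) product_projections(1)[OF pr]]
      comp_in_hom[OF assms(2) product_projections(2)[OF pr]] .
  then have "\<exists>!v. v \<in> hom C Q P \<and> Cmp C p1 v = Cmp C p1 u \<and> Cmp C p2 v = Cmp C p2 u"
    using pr unfolding is_product_def by blast
  with assms show ?thesis by metis
qed

lemma product_maps_inverse:
  assumes p: "is_product C A B P p1 p2" and q: "is_product C A B' P' q1 q2"
    and m: "m \<in> hom C B B'" and n: "n \<in> hom C B' B" "Cmp C n m = Idt C B"
    and k: "k \<in> hom C P P'" "Cmp C q1 k = p1" "Cmp C q2 k = Cmp C m p2"
    and k': "k' \<in> hom C P' P" "Cmp C p1 k' = q1" "Cmp C p2 k' = Cmp C n q2"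
  shows "Cmp C k' k = Idt C P"
proof (rule product_mediator_unique[OF p comp_in_hom[OF k(1) k'(1)] id_in_hom[OF hom_dom_in_Ob[OF k(1)]]])
  note hp = product_projections[OF p] and hq = product_projections[OF q]
  show "Cmp C p1 (Cmp C k' k) = Cmp C p1 (Idt C P)"
    using comp_assoc_hom[OF k(1) k'(1) hp(1)] k k' hp by (simp add: hom_def)
  have "Cmp C p2 (Cmp C k' k) = Cmp C n (Cmp C q2 k)"
    using comp_assoc_hom[OF k(1) k'(1) hp(2)] comp_assoc_hom[OF k(1) hq(2) n(1)]
      k'(3) by simp
  also have "\<dots> = p2"
    using comp_assoc_hom[OF hp(2) m n(1)] k(3) n(2) hp by (simp add: hom_def)
  finally show "Cmp C p2 (Cmp C k' k) = Cmp C p2 (Idt C P)"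
    using hp by (simp add: hom_def)
qed

lemma product_iso_over_first:
  assumes p: "is_product C A B P p1 p2" and q: "is_product C A B' P' q1 q2"
    and m: "m \<in> hom C B B'" "is_iso C m"
  obtains k where "k \<in> hom C P P'" "is_iso C k" "Cmp C q1 k = p1"
proof -
  note hp = product_projections[OF p] and hq = product_projections[OF q]
  obtain n where n: "n \<in> hom C B' B" "Cmp C n m = Idt C B" "Cmp C m n = Idt C B'"
    using iso_inverse[OF m(2,1)] .
  obtain k where k: "k \<in> hom C P P'" "Cmp C q1 k = p1" "Cmp C q2 k = Cmp C m p2"
    using product_mediator[OF q hp(1) comp_in_hom[OF hp(2) m(1)]] .
  obtain k' where k': "k' \<in> hom C P' P" "Cmp C p1 k' = q1" "Cmp C p2 k' = Cmp C n q2"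
    using product_mediator[OF p hq(1) comp_in_hom[OF hq(2) n(1)]] .
  have "is_iso C k"
    using isoI[OF k(1) k'(1) product_maps_inverse[OF p q m(1) n(1,2) k k']
        product_maps_inverse[OF q p n(1) m(1) n(3) k' k]] .
  with k show thesis using that by blast
qed

end

section \<open>Unit-cartesian arrows of a pointed endofunctor\<close>

lemma functor_hom: "is_functor C D F \<Longrightarrow> f \<in> hom C A B \<Longrightarrow> FA F f \<in> hom D (FO F A) (FO F B)"
  unfolding is_functor_def by blast

lemma functor_comp:
  "is_functor C D F \<Longrightarrow> f \<in> hom C A B \<Longrightarrow> g \<in> hom C B B' \<Longrightarrow>
   FA F (Cmp C g f) = Cmp D (FA F g) (FA F f)"
  unfolding is_functor_def hom_def by auto

lemma functor_id: "is_functor C D F \<Longrightarrow> A \<in> Ob C \<Longrightarrow> FA F (Idt C A) = Idt D (FO F A)"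
  unfolding is_functor_def by auto

lemma functor_Ob: "is_functor C D F \<Longrightarrow> A \<in> Ob C \<Longrightarrow> FO F A \<in> Ob D"
  unfolding is_functor_def by blast

lemma functor_fcomp:
  assumes F: "is_functor C D F" and G: "is_functor D E G"
  shows "is_functor C E (fcomp G F)"
proof -
  have "FA G (FA F (Cmp C g f)) = Cmp E (FA G (FA F g)) (FA G (FA F f))"
    if "f \<in> Ar C" "g \<in> Ar C" "Cod C f = Dom C g" for f g
  proof -
    have "f \<in> hom C (Dom C f) (Cod C f)" "g \<in> hom C (Cod C f) (Cod C g)"
      using that by (simp_all add: hom_def)
    then show ?thesis
      using functor_comp[OF F] functor_comp[OF G] functor_hom[OF F] by metis
  qed
  with F G show ?thesis
    unfolding is_functor_def fcomp_def by simp
qed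

locale pointed_endofunctor = cat D for D :: "('o,'a) category" +
  fixes T :: "('o,'a,'o,'a) cfunctor" and \<eta> :: "'o \<Rightarrow> 'a"
  assumes endofunctor: "is_functor D D T"
    and unit_natural: "is_nat_trans D D (id_functor D) T \<eta>"
begin

lemma unit_in_hom: "A \<in> Ob D \<Longrightarrow> \<eta> A \<in> hom D A (FO T A)"
  using unit_natural unfolding is_nat_trans_def id_functor_def by auto

lemma unit_square: "f \<in> hom D A B \<Longrightarrow> Cmp D (\<eta> B) f = Cmp D (FA T f) (\<eta> A)"
  using unit_natural unfolding is_nat_trans_def id_functor_def hom_def by auto

lemma unit_square_comp:
  assumes g: "g \<in> hom D A B" and u: "u \<in> hom D Q A"
  shows "Cmp D (\<eta> B) (Cmp D g u) = Cmp D (FA T g) (Cmp D (\<eta> A) u)"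
  using comp_assoc_hom[OF u g unit_in_hom[OF hom_cod_in_Ob[OF g]]] unit_square[OF g]
    comp_assoc_hom[OF u unit_in_hom[OF hom_dom_in_Ob[OF g]] functor_hom[OF endofunctor g]]
  by simp

definition unit_cartesian :: "'a \<Rightarrow> bool" where
  "unit_cartesian g \<longleftrightarrow> is_pullback D (\<eta> (Cod D g)) (FA T g) (Dom D g) g (\<eta> (Dom D g))"

lemma unit_cartesianI:
  assumes g: "g \<in> hom D A B"
    and ex: "\<And>Q x y. x \<in> hom D Q B \<Longrightarrow> y \<in> hom D Q (FO T A) \<Longrightarrow>
      Cmp D (\<eta> B) x = Cmp D (FA T g) y \<Longrightarrow> \<exists>u\<in>hom D Q A. Cmp D g u = x \<and> Cmp D (\<eta> A) u = y"
    and uniq: "\<And>Q u u'. u \<in> hom D Q A \<Longrightarrow> u' \<in> hom D Q A \<Longrightarrow>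
      Cmp D g u = Cmp D g u' \<Longrightarrow> Cmp D (\<eta> A) u = Cmp D (\<eta> A) u' \<Longrightarrow> u = u'"
  shows "unit_cartesian g"
proof -
  have A: "A \<in> Ob D" and B: "B \<in> Ob D" using g by (auto simp: hom_def)
  note hom_facts = g unit_in_hom[OF A] unit_in_hom[OF B] functor_hom[OF endofunctor g]
  show ?thesis
    unfolding unit_cartesian_def is_pullback_def
  proof (intro conjI allI impI)
    fix Q x y assume "x \<in> hom D Q (Dom D (\<eta> (Cod D g)))" "y \<in> hom D Q (Dom D (FA T g))"
      "Cmp D (\<eta> (Cod D g)) x = Cmp D (FA T g) y"
    then have "x \<in> hom D Q B" "y \<in> hom D Q (FO T A)" "Cmp D (\<eta> B) x = Cmp D (FA T g) y"
      using hom_facts by (simp_all add: hom_def)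
    then show "\<exists>!u. u \<in> hom D Q (Dom D g) \<and> Cmp D g u = x \<and> Cmp D (\<eta> (Dom D g)) u = y"
      using ex uniq g by (simp add: hom_def) metis
  qed (use hom_facts unit_square[OF g] in \<open>simp_all add: hom_def\<close>)
qed

lemma unit_cartesian_pullback:
  "g \<in> hom D A B \<Longrightarrow> unit_cartesian g \<longleftrightarrow> is_pullback D (\<eta> B) (FA T g) A g (\<eta> A)"
  unfolding unit_cartesian_def hom_def by auto

lemma unit_cartesian_mediator:
  assumes "unit_cartesian g" and g: "g \<in> hom D A B" and "x \<in> hom D Q B" "y \<in> hom D Q (FO T A)"
    and sq: "Cmp D (\<eta> B) x = Cmp D (FA T g) y"
  obtains u where "u \<in> hom D Q A" "Cmp D g u = x" "Cmp D (\<eta> A) u = y"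
proof -
  have "x \<in> hom D Q (Dom D (\<eta> B))" "y \<in> hom D Q (Dom D (FA T g))"
    using assms unit_in_hom[OF hom_cod_in_Ob[OF g]] functor_hom[OF endofunctor g]
    by (simp_all add: hom_def)
  with pullback_mediator[OF _ _ _ sq] that assms show thesis
    by (metis unit_cartesian_pullback)
qed

lemma unit_cartesian_unique:
  assumes "unit_cartesian g" "g \<in> hom D A B" "u \<in> hom D Q A" "u' \<in> hom D Q A"
    "Cmp D g u = Cmp D g u'" "Cmp D (\<eta> A) u = Cmp D (\<eta> A) u'"
  shows "u = u'"
  using pullback_mediator_unique[of "\<eta> B" "FA T g" A g "\<eta> A"] assms
  by (auto simp: unit_cartesian_pullback)

lemma iso_unit_cartesian:
  assumes k: "k \<in> hom D A B" "is_iso D k"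
  shows "unit_cartesian k"
proof -
  obtain k' where k': "k' \<in> hom D B A" "Cmp D k' k = Idt D A" "Cmp D k k' = Idt D B"
    using iso_inverse[OF k(2,1)] .
  have A: "A \<in> Ob D" and B: "B \<in> Ob D" using k(1) by (auto simp: hom_def)
  have Tk: "FA T k \<in> hom D (FO T A) (FO T B)" and Tk': "FA T k' \<in> hom D (FO T B) (FO T A)"
    using functor_hom[OF endofunctor] k(1) k'(1) by auto
  have TkTk: "Cmp D (FA T k') (FA T k) = Idt D (FO T A)"
    using functor_comp[OF endofunctor k(1) k'(1)] functor_id[OF endofunctor A] k'(2) by simp
  show ?thesis
  proof (rule unit_cartesianI[OF k(1)])
    fix Q x y assume x: "x \<in> hom D Q B" and y: "y \<in> hom D Q (FO T A)"
      and sq: "Cmp D (\<eta> B) x = Cmp D (FA T k) y"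
    have "Cmp D k (Cmp D k' x) = x"
      using comp_assoc_hom[OF x k'(1) k(1)] k'(3) x by (simp add: hom_def)
    moreover have "Cmp D (\<eta> A) (Cmp D k' x) = y"
    proof -
      have "Cmp D (\<eta> A) (Cmp D k' x) = Cmp D (FA T k') (Cmp D (\<eta> B) x)"
        using comp_assoc_hom[OF x k'(1) unit_in_hom[OF A]] unit_square[OF k'(1)]
          comp_assoc_hom[OF x unit_in_hom[OF B] Tk'] by simp
      also have "\<dots> = y"
        using sq comp_assoc_hom[OF y Tk Tk'] TkTk y by (simp add: hom_def)
      finally show ?thesis .
    qed
    ultimately show "\<exists>u\<in>hom D Q A. Cmp D k u = x \<and> Cmp D (\<eta> A) u = y"
      using comp_in_hom[OF x k'(1)] by blast
  next
    fix Q u u' assume u: "u \<in> hom D Q A" and u': "u' \<in> hom D Q A" and eq: "Cmp D k u = Cmp D k u'"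
    have "Cmp D (Cmp D k' k) u = Cmp D (Cmp D k' k) u'"
      using comp_assoc_hom[OF u k(1) k'(1)] comp_assoc_hom[OF u' k(1) k'(1)] eq by simp
    then show "u = u'"
      using k'(2) u u' by (simp add: hom_def)
  qed
qed

lemma unit_cartesian_comp:
  assumes g: "g \<in> hom D A B" and h: "h \<in> hom D B C"
    and "unit_cartesian g" "unit_cartesian h"
  shows "unit_cartesian (Cmp D h g)"
proof (rule unit_cartesianI[OF comp_in_hom[OF g h]])
  have Tg: "FA T g \<in> hom D (FO T A) (FO T B)" using functor_hom[OF endofunctor g] .
  fix Q x y assume x: "x \<in> hom D Q C" and y: "y \<in> hom D Q (FO T A)"
    and sq: "Cmp D (\<eta> C) x = Cmp D (FA T (Cmp D h g)) y"
  have "Cmp D (\<eta> C) x = Cmp D (FA T h) (Cmp D (FA T g) y)"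
    using sq functor_comp[OF endofunctor g h] comp_assoc_hom[OF y Tg functor_hom[OF endofunctor h]]
    by simp
  then obtain v where v: "v \<in> hom D Q B" "Cmp D h v = x" "Cmp D (\<eta> B) v = Cmp D (FA T g) y"
    using unit_cartesian_mediator[OF \<open>unit_cartesian h\<close> h x comp_in_hom[OF y Tg]] by blast
  then obtain u where u: "u \<in> hom D Q A" "Cmp D g u = v" "Cmp D (\<eta> A) u = y"
    using unit_cartesian_mediator[OF \<open>unit_cartesian g\<close> g _ y] by blast
  show "\<exists>u\<in>hom D Q A. Cmp D (Cmp D h g) u = x \<and> Cmp D (\<eta> A) u = y"
    using u v comp_assoc_hom[OF u(1) g h] by auto
next
  fix Q u u' assume u: "u \<in> hom D Q A" and u': "u' \<in> hom D Q A"
    and eq: "Cmp D (Cmp D h g) u = Cmp D (Cmp D h g) u'" and eta: "Cmp D (\<eta> A) u = Cmp D (\<eta> A) u'"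
  have "Cmp D (\<eta> B) (Cmp D g u) = Cmp D (\<eta> B) (Cmp D g u')"
    using unit_square_comp[OF g u] unit_square_comp[OF g u'] eta by simp
  then have "Cmp D g u = Cmp D g u'"
    using unit_cartesian_unique[OF \<open>unit_cartesian h\<close> h comp_in_hom[OF u g] comp_in_hom[OF u' g]]
      eq comp_assoc_hom[OF u g h] comp_assoc_hom[OF u' g h] by simp
  then show "u = u'"
    using unit_cartesian_unique[OF \<open>unit_cartesian g\<close> g u u' _ eta] by simp
qed

lemma unit_cartesian_comp_cancel:
  assumes g: "g \<in> hom D A B" and h: "h \<in> hom D B C"
    and "unit_cartesian h" "unit_cartesian (Cmp D h g)"
  shows "unit_cartesian g"
proof (rule unit_cartesianI[OF g])
  have Tg: "FA T g \<in> hom D (FO T A) (FO T B)" using functor_hom[OF endofunctor g] .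
  have hg: "Cmp D h g \<in> hom D A C" using comp_in_hom[OF g h] .
  fix Q x y assume x: "x \<in> hom D Q B" and y: "y \<in> hom D Q (FO T A)"
    and sq: "Cmp D (\<eta> B) x = Cmp D (FA T g) y"
  have "Cmp D (\<eta> C) (Cmp D h x) = Cmp D (FA T (Cmp D h g)) y"
    using unit_square_comp[OF h x] sq functor_comp[OF endofunctor g h]
      comp_assoc_hom[OF y Tg functor_hom[OF endofunctor h]] by simp
  then obtain u where u: "u \<in> hom D Q A" "Cmp D (Cmp D h g) u = Cmp D h x" "Cmp D (\<eta> A) u = y"
    using unit_cartesian_mediator[OF \<open>unit_cartesian (Cmp D h g)\<close> hg comp_in_hom[OF x h] y] by blast
  have "Cmp D h (Cmp D g u) = Cmp D h x"
    using u(2) comp_assoc_hom[OF u(1) g h] by simp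
  moreover have "Cmp D (\<eta> B) (Cmp D g u) = Cmp D (\<eta> B) x"
    using unit_square_comp[OF g u(1)] u(3) sq by simp
  ultimately have "Cmp D g u = x"
    using unit_cartesian_unique[OF \<open>unit_cartesian h\<close> h comp_in_hom[OF u(1) g] x] by blast
  with u show "\<exists>u\<in>hom D Q A. Cmp D g u = x \<and> Cmp D (\<eta> A) u = y"
    by blast
next
  fix Q u u' assume u: "u \<in> hom D Q A" and u': "u' \<in> hom D Q A"
    and eq: "Cmp D g u = Cmp D g u'" and eta: "Cmp D (\<eta> A) u = Cmp D (\<eta> A) u'"
  have "Cmp D (Cmp D h g) u = Cmp D (Cmp D h g) u'"
    using eq comp_assoc_hom[OF u g h] comp_assoc_hom[OF u' g h] by simp
  then show "u = u'"
    using unit_cartesian_unique[OF \<open>unit_cartesian (Cmp D h g)\<close> comp_in_hom[OF g h] u u' _ eta] by blast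
qed

lemma unit_cartesian_product_projection_transfer:
  assumes p: "is_product D W V P p1 p2" and q: "is_product D W V' P' q1 q2"
    and "m \<in> hom D V V'" "is_iso D m" and "unit_cartesian q1"
  shows "unit_cartesian p1"
proof -
  obtain k where k: "k \<in> hom D P P'" "is_iso D k" "Cmp D q1 k = p1"
    using product_iso_over_first[OF p q assms(3,4)] .
  show ?thesis
    using unit_cartesian_comp[OF k(1) product_projections(1)[OF q] iso_unit_cartesian[OF k(1,2)] \<open>unit_cartesian q1\<close>]
      k(3) by simp
qed

lemma unit_cartesian_graph:
  assumes pE: "is_product D W V E \<pi>1 \<pi>2" and pM: "is_product D W W M \<rho>1 \<rho>2"
    and f: "f \<in> hom D V W"
    and s: "s \<in> hom D V E" "Cmp D \<pi>1 s = f" "Cmp D \<pi>2 s = Idt D V"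
    and \<Delta>: "\<Delta> \<in> hom D W M" "Cmp D \<rho>1 \<Delta> = Idt D W" "Cmp D \<rho>2 \<Delta> = Idt D W" "unit_cartesian \<Delta>"
  shows "unit_cartesian s"
proof (rule unit_cartesianI[OF s(1)])
  note hE = product_projections[OF pE] and hM = product_projections[OF pM]
  note \<pi>1 = hE(1) and \<pi>2 = hE(2) and \<rho>1 = hM(1) and \<rho>2 = hM(2)
  obtain t where t: "t \<in> hom D E M" "Cmp D \<rho>1 t = \<pi>1" "Cmp D \<rho>2 t = Cmp D f \<pi>2"
    using product_mediator[OF pM \<pi>1 comp_in_hom[OF \<pi>2 f]] .
  have ts: "Cmp D t s = Cmp D \<Delta> f"
  proof (rule product_mediator_unique[OF pM comp_in_hom[OF s(1) t(1)] comp_in_hom[OF f \<Delta>(1)]])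
    show "Cmp D \<rho>1 (Cmp D t s) = Cmp D \<rho>1 (Cmp D \<Delta> f)"
      using comp_assoc_hom[OF s(1) t(1) \<rho>1] comp_assoc_hom[OF f \<Delta>(1) \<rho>1] t(2) s(2) \<Delta>(2) f
      by (simp add: hom_def)
    show "Cmp D \<rho>2 (Cmp D t s) = Cmp D \<rho>2 (Cmp D \<Delta> f)"
      using comp_assoc_hom[OF s(1) t(1) \<rho>2] comp_assoc_hom[OF f \<Delta>(1) \<rho>2] t(3) s(3) \<Delta>(3) f
        comp_assoc_hom[OF s(1) \<pi>2 f] by (simp add: hom_def)
  qed
  fix Q a b assume a: "a \<in> hom D Q E" and b: "b \<in> hom D Q (FO T V)"
    and sq: "Cmp D (\<eta> E) a = Cmp D (FA T s) b"
  have Tfb: "Cmp D (FA T f) b \<in> hom D Q (FO T W)"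
    using comp_in_hom[OF b functor_hom[OF endofunctor f]] .
  have "Cmp D (\<eta> M) (Cmp D t a) = Cmp D (FA T (Cmp D t s)) b"
    using unit_square_comp[OF t(1) a] sq functor_comp[OF endofunctor s(1) t(1)]
      comp_assoc_hom[OF b functor_hom[OF endofunctor s(1)] functor_hom[OF endofunctor t(1)]] by simp
  also have "\<dots> = Cmp D (FA T \<Delta>) (Cmp D (FA T f) b)"
    using ts functor_comp[OF endofunctor f \<Delta>(1)]
      comp_assoc_hom[OF b functor_hom[OF endofunctor f] functor_hom[OF endofunctor \<Delta>(1)]] by simp
  finally obtain x where x: "x \<in> hom D Q W" "Cmp D \<Delta> x = Cmp D t a"
    using unit_cartesian_mediator[OF \<Delta>(4,1) _ Tfb] comp_in_hom[OF a t(1)] by metis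
  have "Cmp D \<pi>1 a = x" "Cmp D f (Cmp D \<pi>2 a) = x"
    using comp_assoc_hom[OF a t(1) \<rho>1] comp_assoc_hom[OF a t(1) \<rho>2] comp_assoc_hom[OF a \<pi>2 f]
      comp_assoc_hom[OF x(1) \<Delta>(1) \<rho>1] comp_assoc_hom[OF x(1) \<Delta>(1) \<rho>2] t \<Delta> x
    by (simp_all add: hom_def)
  then have "Cmp D s (Cmp D \<pi>2 a) = a"
    using product_mediator_unique[OF pE comp_in_hom[OF comp_in_hom[OF a \<pi>2] s(1)] a]
      comp_assoc_hom[OF comp_in_hom[OF a \<pi>2] s(1) \<pi>1] comp_assoc_hom[OF comp_in_hom[OF a \<pi>2] s(1) \<pi>2]
      s a \<pi>2 by (simp add: hom_def)
  moreover have "Cmp D (\<eta> V) (Cmp D \<pi>2 a) = Cmp D (FA T (Cmp D \<pi>2 s)) b"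
    using unit_square_comp[OF \<pi>2 a] sq functor_comp[OF endofunctor s(1) \<pi>2]
      comp_assoc_hom[OF b functor_hom[OF endofunctor s(1)] functor_hom[OF endofunctor \<pi>2]] by simp
  then have "Cmp D (\<eta> V) (Cmp D \<pi>2 a) = b"
    using s(3) functor_id[OF endofunctor hom_dom_in_Ob[OF f]] b by (simp add: hom_def)
  ultimately show "\<exists>c\<in>hom D Q V. Cmp D s c = a \<and> Cmp D (\<eta> V) c = b"
    using comp_in_hom[OF a \<pi>2] by blast
next
  fix Q c c' assume c: "c \<in> hom D Q V" and c': "c' \<in> hom D Q V" and eq: "Cmp D s c = Cmp D s c'"
  have "Cmp D \<pi>2 (Cmp D s c) = c" if "c \<in> hom D Q V" for c
    using comp_assoc_hom[OF that s(1) product_projections(2)[OF pE]] s(3) that by (simp add: hom_def)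
  then show "c = c'"
    using c c' eq by metis
qed

lemma unit_cartesian_of_product_projections:
  assumes pE: "is_product D W V E \<pi>1 \<pi>2" and pM: "is_product D W W M \<rho>1 \<rho>2"
    and f: "f \<in> hom D V W" and "unit_cartesian \<pi>1" "unit_cartesian \<rho>1"
  shows "unit_cartesian f"
proof -
  have W: "W \<in> Ob D" and V: "V \<in> Ob D" using f by (auto simp: hom_def)
  obtain \<Delta> where \<Delta>: "\<Delta> \<in> hom D W M" "Cmp D \<rho>1 \<Delta> = Idt D W" "Cmp D \<rho>2 \<Delta> = Idt D W"
    using product_mediator[OF pM id_in_hom[OF W] id_in_hom[OF W]] .
  have "unit_cartesian \<Delta>"
    using unit_cartesian_comp_cancel[OF \<Delta>(1) product_projections(1)[OF pM] \<open>unit_cartesian \<rho>1\<close>] \<Delta>(2)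
      iso_unit_cartesian[OF id_in_hom[OF W] id_iso[OF W]] by simp
  obtain s where s: "s \<in> hom D V E" "Cmp D \<pi>1 s = f" "Cmp D \<pi>2 s = Idt D V"
    using product_mediator[OF pE f id_in_hom[OF V]] .
  have "unit_cartesian s"
    using unit_cartesian_graph[OF pE pM f s \<Delta> \<open>unit_cartesian \<Delta>\<close>] .
  then show ?thesis
    using unit_cartesian_comp[OF s(1) product_projections(1)[OF pE] _ \<open>unit_cartesian \<pi>1\<close>] s(2) by simp
qed

end

section \<open>The sliced adjunction\<close>

lemma base_change_product:
  assumes "cartesian D" "W \<in> Ob D" "V \<in> Ob D"
  obtains P p2 where "is_product D W V P (base_change D W V) p2"
proof -
  have "\<exists>t. case t of (P, p1, p2) \<Rightarrow> is_product D W V P p1 p2"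
    using assms unfolding cartesian_def by blast
  from someI_ex[OF this] show thesis
    using that unfolding base_change_def by (auto split: prod.splits)
qed

locale sliced_adjunction =
  fixes D :: "('d,'e) category" and C :: "('c,'f) category"
    and L :: "('d,'e,'c,'f) cfunctor" and R :: "('c,'f,'d,'e) cfunctor"
    and \<eta> :: "'d \<Rightarrow> 'e" and \<epsilon> :: "'c \<Rightarrow> 'f" and W :: 'd
  assumes category_D: "is_category D" and category_C: "is_category C"
    and adjunction: "is_adjunction D C L R \<eta> \<epsilon>" and W: "W \<in> Ob D"
    and pullbacks_exist: "\<forall>Z. \<forall>h\<in>hom C Z (FO L W). \<exists>P p1 p2. is_pullback D (\<eta> W) (FA R h) P p1 p2"
begin

lemma functor_L: "is_functor D C L" and functor_R: "is_functor C D R"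
  using adjunction unfolding is_adjunction_def by auto

sublocale pointed_endofunctor D "fcomp R L" \<eta>
  using category_D functor_fcomp[OF functor_L functor_R] adjunction
  by unfold_locales (auto simp: is_adjunction_def)

sublocale C: cat C
  using category_C by unfold_locales

lemma pullback_unit_along_id:
  "is_pullback D (\<eta> W) (FA R (Idt C (FO L W))) W (Idt D W) (\<eta> W)"
  using pullback_along_id[of "\<eta> W"] unit_in_hom[OF W] functor_id[OF functor_R functor_Ob[OF functor_L W]]
  by (simp add: hom_def fcomp_def)

lemma sl_pb_pullback:
  assumes "h \<in> hom C Z (FO L W)" "sl_pb D R \<eta> W h = (P, p1, p2)"
  shows "is_pullback D (\<eta> W) (FA R h) P p1 p2"
proof -
  have "\<exists>t. case t of (P, p1, p2) \<Rightarrow> is_pullback D (\<eta> W) (FA R h) P p1 p2"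
    using pullbacks_exist assms(1) by blast
  from someI_ex[OF this] show ?thesis
    using assms(2) unfolding sl_pb_def by simp
qed

lemma sl_unit_iso_iff_unit_cartesian:
  assumes g: "g \<in> hom D A W"
  shows "is_iso D (sl_unit D L R \<eta> W g) \<longleftrightarrow> unit_cartesian g"
proof -
  obtain P p1 p2 where sp: "sl_pb D R \<eta> W (FA L g) = (P, p1, p2)"
    by (metis prod_cases3)
  have pb: "is_pullback D (\<eta> W) (FA (fcomp R L) g) P p1 p2"
    using sl_pb_pullback[OF functor_hom[OF functor_L g] sp] by (simp add: fcomp_def)
  have x: "g \<in> hom D A (Dom D (\<eta> W))" and y: "\<eta> A \<in> hom D A (Dom D (FA (fcomp R L) g))"
    using g unit_in_hom[OF W] unit_in_hom[OF hom_dom_in_Ob[OF g]] functor_hom[OF endofunctor g]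
    by (simp_all add: hom_def)
  have sq: "Cmp D (\<eta> W) g = Cmp D (FA (fcomp R L) g) (\<eta> A)"
    using unit_square[OF g] .
  have "\<exists>!u. u \<in> hom D A P \<and> Cmp D p1 u = g \<and> Cmp D p2 u = \<eta> A"
    using pb x y sq unfolding is_pullback_def by blast
  moreover have "sl_unit D L R \<eta> W g = (THE u. u \<in> hom D A P \<and> Cmp D p1 u = g \<and> Cmp D p2 u = \<eta> A)"
    using g unfolding sl_unit_def sp by (simp add: hom_def)
  ultimately have "sl_unit D L R \<eta> W g \<in> hom D A P" "Cmp D p1 (sl_unit D L R \<eta> W g) = g"
    "Cmp D p2 (sl_unit D L R \<eta> W g) = \<eta> A"
    using theI'[of "\<lambda>u. u \<in> hom D A P \<and> Cmp D p1 u = g \<and> Cmp D p2 u = \<eta> A"] by auto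
  then show ?thesis
    using pullback_mediator_iso_iff[OF pb x y sq] unit_cartesian_pullback[OF g] by blast
qed

lemma unit_cartesian_base_change_of_pullback:
  assumes "cartesian D"
    and unit_iso: "\<forall>X. \<forall>\<phi>\<in>hom C X (FO L W).
        is_iso D (sl_unit D L R \<eta> W (base_change D W (Dom D (sl_R D R \<eta> W \<phi>))))"
    and h: "h \<in> hom C Z (FO L W)" and pb: "is_pullback D (\<eta> W) (FA R h) V p1 p2"
  shows "unit_cartesian (base_change D W V)"
proof -
  obtain P q1 q2 where sp: "sl_pb D R \<eta> W h = (P, q1, q2)"
    by (metis prod_cases3)
  have pbP: "is_pullback D (\<eta> W) (FA R h) P q1 q2"
    using sl_pb_pullback[OF h sp] .
  have P: "P \<in> Ob D" and V: "V \<in> Ob D"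
    using hom_dom_in_Ob[OF pullback_arrows(3)[OF pbP]] hom_dom_in_Ob[OF pullback_arrows(3)[OF pb]] .
  have "Dom D (sl_R D R \<eta> W h) = P"
    using pullback_arrows(3)[OF pbP] sp unfolding sl_R_def by (simp add: hom_def)
  then have iso_P: "is_iso D (sl_unit D L R \<eta> W (base_change D W P))"
    using unit_iso h by metis
  obtain P' r2 where prodP: "is_product D W P P' (base_change D W P) r2"
    using base_change_product[OF \<open>cartesian D\<close> W P] .
  obtain V' s2 where prodV: "is_product D W V V' (base_change D W V) s2"
    using base_change_product[OF \<open>cartesian D\<close> W V] .
  obtain m where m: "m \<in> hom D V P" "Cmp D q1 m = p1" "Cmp D q2 m = p2"
    using pullback_mediator[OF pbP pullback_arrows(3-5)[OF pb]] .
  have "is_iso D m"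
    using pullback_mediator_iso_iff[OF pbP pullback_arrows(3-5)[OF pb] m] pb by blast
  moreover have "unit_cartesian (base_change D W P)"
    using iso_P sl_unit_iso_iff_unit_cartesian[OF product_projections(1)[OF prodP]] by blast
  ultimately show ?thesis
    using unit_cartesian_product_projection_transfer[OF prodV prodP m(1)] by blast
qed

end

theorem lemma2p1:
  fixes D :: "('d,'e) category" and C :: "('c,'f) category"
    and L :: "('d,'e,'c,'f) cfunctor" and R :: "('c,'f,'d,'e) cfunctor"
    and \<eta> :: "'d \<Rightarrow> 'e" and \<epsilon> :: "'c \<Rightarrow> 'f"
    and W V :: 'd and f :: 'e
  assumes "is_category D" and "is_category C"
    and "is_adjunction D C L R \<eta> \<epsilon>"
    and "cartesian D"
    and "W \<in> Ob D"
    and pb_ex: "\<forall>Z. \<forall>h\<in>hom C Z (FO L W). \<exists>P p1 p2. is_pullback D (\<eta> W) (FA R h) P p1 p2"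
    and counit_iso: "\<forall>Z. \<forall>h\<in>hom C Z (FO L W). is_iso C (sl_counit D C L R \<eta> \<epsilon> W h)"
    and unit_iso: "\<forall>X. \<forall>\<phi>\<in>hom C X (FO L W).
        is_iso D (sl_unit D L R \<eta> W (base_change D W (Dom D (sl_R D R \<eta> W \<phi>))))"
    and "f \<in> hom D V W"
  shows "is_iso D (sl_unit D L R \<eta> W (base_change D W V)) \<longleftrightarrow> is_iso D (sl_unit D L R \<eta> W f)"
proof -
  interpret sliced_adjunction D C L R \<eta> \<epsilon> W
    using assms by unfold_locales
  note f = \<open>f \<in> hom D V W\<close>
    and cartesian_projection = unit_cartesian_base_change_of_pullback[OF \<open>cartesian D\<close> unit_iso]
  obtain E \<pi>2 where prodV: "is_product D W V E (base_change D W V) \<pi>2"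
    using base_change_product[OF \<open>cartesian D\<close> W hom_dom_in_Ob[OF f]] .
  obtain M \<rho>2 where prodW: "is_product D W W M (base_change D W W) \<rho>2"
    using base_change_product[OF \<open>cartesian D\<close> W W] .
  have "unit_cartesian (base_change D W V) \<longleftrightarrow> unit_cartesian f"
  proof
    have "unit_cartesian (base_change D W W)"
      using cartesian_projection[OF C.id_in_hom[OF functor_Ob[OF functor_L W]] pullback_unit_along_id] .
    moreover assume "unit_cartesian (base_change D W V)"
    ultimately show "unit_cartesian f"
      using unit_cartesian_of_product_projections[OF prodV prodW f] by blast
  next
    assume "unit_cartesian f"
    then show "unit_cartesian (base_change D W V)"
      using cartesian_projection[OF functor_hom[OF functor_L f]] unit_cartesian_pullback[OF f]
      by (simp add: fcomp_def)
  qed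
  then show ?thesis
    using sl_unit_iso_iff_unit_cartesian[OF product_projections(1)[OF prodV]]
      sl_unit_iso_iff_unit_cartesian[OF f] by blast
qed

end
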